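(* Let $N\ge3$ be odd, let $A=A(h)$ and $C=e_2^T$ be as in the context, and assume $h_\alpha,h_\beta,h_1,\dots,h_{N-1}$ are all nonzero. Let $P$ be the $(N+2)\times(N+2)$ matrix whose first $N+1$ rows are $C,CA,\dots,CA^{N}$ and whose last row is $(0,\dots,0,1)$, partitioned as $$P=\begin{pmatrix}\bar P & \mathbf p\\ \mathbf 0^T & 1\end{pmatrix},\qquad \bar P\in\mathbb{R}^{(N+1)\times(N+1)},\ \mathbf p\in\mathbb{R}^{N+1}.$$ Then: (i) $\mathbf p=\big(0,\dots,0,\ h_\beta\prod_{i=1}^{N-1}h_i\big)^T$; (ii) $\det\bar P=h_\alpha h_\beta^{N-1}h_{N-2}^3\prod_{i=1}^{(N-3)/2}h_{2i-1}^{N+2-2i}h_{2i}^{N-1-2i}\neq0$; (iii) with $K=h_\beta^{N-1}\prod_{i=1}^{N-2}h_i^{N-1-i}$, the last ($(N+1)$-th) column of $\bar P^{-1}$ has entries $(\bar P^{-1})_{k,N+1}=0$ for every even $k$, $(\bar P^{-1})_{1,N+1}=-K/\det\bar P$, and for odd $k$ with $3\le k\le N$, $$(\bar P^{-1})_{k,N+1}=-\frac{K}{\det\bar P}\cdot\frac{h_\alpha\prod_{j=1}^{(k-3)/2}h_{2j-1}}{h_\beta\prod_{j=1}^{(k-3)/2}h_{2j}}.$$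
   Context: For an integer $N\ge1$ and real parameters $h=(h_\alpha,h_\beta,h_1,\dots,h_{N-1})$, set $(c_1,c_2,c_3,\dots,c_{N+1})=(h_\alpha,h_\beta,h_1,\dots,h_{N-1})$ and let $A(h)$ be the real $(N+2)\times(N+2)$ tridiagonal matrix with $A_{j,j+1}=c_j$, $A_{j+1,j}=-c_j$ for $j=1,\dots,N+1$ and all other entries zero. $e_j$ denotes the $j$-th standard basis column vector; empty products equal $1$. *)

theory Defs
  imports "Jordan_Normal_Form.Determinant"
begin

definition coef :: "real \<Rightarrow> real \<Rightarrow> (nat \<Rightarrow> real) \<Rightarrow> nat \<Rightarrow> real" where
  "coef ha hb h j = (if j = 1 then ha else if j = 2 then hb else h (j - 2))"

text \<open>The (N+2)x(N+2) tridiagonal matrix A(h); JNF matrices are 0-indexed,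
  so entry (i,j) here is entry (i+1,j+1) of the paper.\<close>
definition Amat :: "nat \<Rightarrow> real \<Rightarrow> real \<Rightarrow> (nat \<Rightarrow> real) \<Rightarrow> real mat" where
  "Amat N ha hb h = mat (N+2) (N+2) (\<lambda>(i,j).
     if j = i + 1 then coef ha hb h (i+1)
     else if i = j + 1 then - coef ha hb h (j+1) else 0)"

definition Cmat :: "nat \<Rightarrow> real mat" where
  "Cmat N = mat 1 (N+2) (\<lambda>(i,j). if j = 1 then 1 else 0)"

definition Pmat :: "nat \<Rightarrow> real \<Rightarrow> real \<Rightarrow> (nat \<Rightarrow> real) \<Rightarrow> real mat" where
  "Pmat N ha hb h = mat (N+2) (N+2) (\<lambda>(i,j).
     if i \<le> N then (Cmat N * (Amat N ha hb h ^\<^sub>m i)) $$ (0, j)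
     else if j = N + 1 then 1 else 0)"

definition Pbar :: "nat \<Rightarrow> real \<Rightarrow> real \<Rightarrow> (nat \<Rightarrow> real) \<Rightarrow> real mat" where
  "Pbar N ha hb h = mat (N+1) (N+1) (\<lambda>(i,j). Pmat N ha hb h $$ (i,j))"

definition pvec :: "nat \<Rightarrow> real \<Rightarrow> real \<Rightarrow> (nat \<Rightarrow> real) \<Rightarrow> real vec" where
  "pvec N ha hb h = vec (N+1) (\<lambda>i. Pmat N ha hb h $$ (i, N+1))"

end

theory Submission
  imports Defs
begin

(* Write a_0, a_1, ... for the superdiagonal (h_alpha, h_beta, h_1, ...) of A and r_k = C A^k for
   the rows of the observability matrix. As A is skew-symmetric, r_(k+1) = -A r_k, so r_k vanishes
   beyond index k+1 and r_k(k+1) = a_1 ... a_k: this gives p, and Pbar with its first column and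
   last row deleted is lower triangular. For odd N the vector v with vanishing odd entries and
   v_(2m) = prod_(i<m) a_(2i) / a_(2i+1) spans the kernel of A, so r_k . v = 0 for all k and the
   truncation of v satisfies Pbar v = -(a_1 ... a_N) v_(N+1) e_N. Cramer's rule in the first column
   (v_0 = 1) turns this into the value of det Pbar, and it also shows that the last column of
   Pbar^-1 is proportional to v. *)

lemma prod_partial_prods:
  fixes f :: "nat \<Rightarrow> 'a::comm_monoid_mult"
  shows "(\<Prod>k\<le>n. \<Prod>i=1..k. f i) = (\<Prod>i=1..n. f i ^ (Suc n - i))"
proof (induction n)
  case 0
  then show ?case by simp
next
  case (Suc n)
  have "(\<Prod>i=1..Suc n. f i ^ (Suc (Suc n) - i)) = (\<Prod>i=1..Suc n. f i ^ (Suc n - i) * f i)"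
    by (intro prod.cong) (auto simp: Suc_diff_le mult.commute)
  also have "\<dots> = (\<Prod>i=1..n. f i ^ (Suc n - i)) * (\<Prod>i=1..Suc n. f i)"
    by (simp add: prod.distrib prod.cl_ivl_Suc)
  finally show ?case
    using Suc.IH by simp
qed

lemma prod_atLeastAtMost_in_pairs:
  fixes f :: "nat \<Rightarrow> 'a::comm_monoid_mult"
  shows "(\<Prod>i=1..2*m. f i) = (\<Prod>i=1..m. f (2*i - 1) * f (2*i))"
  by (induction m) (simp_all add: prod.cl_ivl_Suc mult.assoc)

lemma prod_exponents_regroup:
  fixes h :: "nat \<Rightarrow> 'a::comm_semiring_1"
  shows "(\<Prod>i=1..2*M + 1. h i ^ (2*M + 2 - i)) * (\<Prod>j=1..M + 1. h (2*j - 1)) ^ 2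
    = h (2*M + 1) ^ 3 * (\<Prod>i=1..M. h (2*i - 1) ^ (2*M + 5 - 2*i) * h (2*i) ^ (2*M + 2 - 2*i))"
proof -
  have "(\<Prod>i=1..2*M. h i ^ (2*M + 2 - i)) =
      (\<Prod>i=1..M. h (2*i - 1) ^ (2*M + 3 - 2*i) * h (2*i) ^ (2*M + 2 - 2*i))"
    unfolding prod_atLeastAtMost_in_pairs
  proof (intro prod.cong)
    fix i
    assume "i \<in> {1..M}"
    then have "2*M + 2 - (2*i - 1) = 2*M + 3 - 2*i" by auto
    then show "h (2*i - 1) ^ (2*M + 2 - (2*i - 1)) * h (2*i) ^ (2*M + 2 - 2*i) =
        h (2*i - 1) ^ (2*M + 3 - 2*i) * h (2*i) ^ (2*M + 2 - 2*i)"
      by (simp only:)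
  qed simp
  then have powers: "(\<Prod>i=1..2*M + 1. h i ^ (2*M + 2 - i)) =
      (\<Prod>i=1..M. h (2*i - 1) ^ (2*M + 3 - 2*i) * h (2*i) ^ (2*M + 2 - 2*i)) * h (2*M + 1)"
    by (simp add: prod.cl_ivl_Suc)
  have square: "(\<Prod>j=1..M + 1. h (2*j - 1)) ^ 2 = (\<Prod>i=1..M. h (2*i - 1) ^ 2) * h (2*M + 1) ^ 2"
    by (simp add: prod.cl_ivl_Suc power_mult_distrib prod_power_distrib)
  have "(\<Prod>i=1..M. h (2*i - 1) ^ (2*M + 3 - 2*i) * h (2*i) ^ (2*M + 2 - 2*i))
      * (\<Prod>i=1..M. h (2*i - 1) ^ 2) =
      (\<Prod>i=1..M. h (2*i - 1) ^ (2*M + 5 - 2*i) * h (2*i) ^ (2*M + 2 - 2*i))"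
    unfolding prod.distrib[symmetric]
  proof (intro prod.cong)
    fix i
    assume "i \<in> {1..M}"
    then have "2*M + 5 - 2*i = (2*M + 3 - 2*i) + 2" by auto
    then show "h (2*i - 1) ^ (2*M + 3 - 2*i) * h (2*i) ^ (2*M + 2 - 2*i) * h (2*i - 1) ^ 2 =
        h (2*i - 1) ^ (2*M + 5 - 2*i) * h (2*i) ^ (2*M + 2 - 2*i)"
      by (simp add: power_add power2_eq_square mult_ac)
  qed simp
  then show ?thesis
    unfolding powers square by (simp add: power_numeral_reduce mult_ac)
qed

lemma det_by_vector_first_col:
  fixes M :: "'a::comm_ring_1 mat"
  assumes M: "M \<in> carrier_mat (Suc n) (Suc n)" and x: "x \<in> carrier_vec (Suc n)"
    and x0: "x $ 0 = 1" and Mx: "M *\<^sub>v x = c \<cdot>\<^sub>v unit_vec (Suc n) n"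
  shows "det M = (-1) ^ n * c * det (mat_delete M n 0)"
proof -
  define R where "R = replace_col M (c \<cdot>\<^sub>v unit_vec (Suc n) n) 0"
  have R: "R \<in> carrier_mat (Suc n) (Suc n)"
    using M by (simp add: R_def replace_col_def)
  have "det M = det R"
    using cramer_lemma_mat[OF M x] x0 Mx by (simp add: R_def)
  also have "\<dots> = (\<Sum>i<Suc n. R $$ (i, 0) * cofactor R i 0)"
    using laplace_expansion_column[OF R] by simp
  also have "\<dots> = (-1) ^ n * c * det (mat_delete R n 0)"
    using M by (simp add: R_def replace_col_def cofactor_def if_distrib cong: if_cong)
  also have "mat_delete R n 0 = mat_delete M n 0"
    using M by (intro eq_matI) (auto simp: R_def replace_col_def mat_delete_def)
  finally show ?thesis .
qed

lemma inverse_col_by_vector: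
  fixes M B :: "'a::field mat"
  assumes M: "M \<in> carrier_mat n n" and B: "B \<in> carrier_mat n n" and BM: "B * M = 1\<^sub>m n"
    and x: "x \<in> carrier_vec n" and Mx: "M *\<^sub>v x = c \<cdot>\<^sub>v unit_vec n k"
    and i: "i < n" and k: "k < n"
  shows "c * B $$ (i, k) = x $ i"
proof -
  have "x = (B * M) *\<^sub>v x"
    using BM x by simp
  also have "\<dots> = c \<cdot>\<^sub>v (B *\<^sub>v unit_vec n k)"
    using B M x Mx by (simp add: mult_mat_vec)
  finally have "x $ i = c * (row B i \<bullet> unit_vec n k)"
    using B i by simp
  then show ?thesis
    using B i k by simp
qed

lemma mult_pow_mat_null_vec:
  fixes A C :: "'a::comm_ring_1 mat"
  assumes A: "A \<in> carrier_mat n n" and C: "C \<in> carrier_mat m n"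
    and v: "v \<in> carrier_vec n" and Av: "A *\<^sub>v v = 0\<^sub>v n"
  shows "(C * A ^\<^sub>m Suc k) *\<^sub>v v = 0\<^sub>v m"
proof -
  have Ak: "A ^\<^sub>m k \<in> carrier_mat n n"
    using A by simp
  have CAk: "C * A ^\<^sub>m k \<in> carrier_mat m n"
    using C Ak by simp
  have "(C * A ^\<^sub>m Suc k) *\<^sub>v v = ((C * A ^\<^sub>m k) * A) *\<^sub>v v"
    using assoc_mult_mat[OF C Ak A] by simp
  also have "\<dots> = (C * A ^\<^sub>m k) *\<^sub>v (A *\<^sub>v v)"
    using assoc_mult_mat_vec[OF CAk A v] .
  also have "\<dots> = 0\<^sub>v m"
  proof -
    have "X *\<^sub>v 0\<^sub>v n = 0\<^sub>v m" if "X \<in> carrier_mat m n" for X :: "'a mat"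
      using that by (intro eq_vecI) auto
    then show ?thesis
      using Av CAk by simp
  qed
  finally show ?thesis .
qed

definition skew_tridiag :: "nat \<Rightarrow> (nat \<Rightarrow> real) \<Rightarrow> real mat" where
  "skew_tridiag n a = mat n n (\<lambda>(i, j).
     if j = Suc i then a i else if i = Suc j then - a j else 0)"

lemma skew_tridiag_carrier [simp]: "skew_tridiag n a \<in> carrier_mat n n"
  by (simp add: skew_tridiag_def)

lemma skew_tridiag_mult_vec_index:
  assumes x: "x \<in> carrier_vec n" and i: "i < n"
  shows "(skew_tridiag n a *\<^sub>v x) $ i =
    (if Suc i < n then a i * x $ Suc i else 0) - (if i = 0 then 0 else a (i - 1) * x $ (i - 1))"
proof -
  have "(skew_tridiag n a *\<^sub>v x) $ i =
      (\<Sum>j<n. (if j = Suc i then a i * x $ j else 0) - (if j = i - 1 \<and> i \<noteq> 0 then a j * x $ j else 0))"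
    using x i by (auto simp: skew_tridiag_def scalar_prod_def lessThan_atLeast0 intro!: sum.cong)
  then show ?thesis
    using i by (simp add: sum_subtractf)
qed

lemma skew_tridiag_col: "j < n \<Longrightarrow> col (skew_tridiag n a) j = - row (skew_tridiag n a) j"
  by (intro eq_vecI) (auto simp: skew_tridiag_def)

definition skew_tridiag_null :: "(nat \<Rightarrow> real) \<Rightarrow> nat \<Rightarrow> real" where
  "skew_tridiag_null a j = (if even j then \<Prod>i<j div 2. a (2*i) / a (2*i + 1) else 0)"

lemma skew_tridiag_null_0 [simp]: "skew_tridiag_null a 0 = 1"
  by (simp add: skew_tridiag_null_def)

lemma skew_tridiag_null_even_Suc:
  "skew_tridiag_null a (2 * Suc m) = skew_tridiag_null a (2*m) * (a (2*m) / a (2*m + 1))"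
  by (simp add: skew_tridiag_null_def)

lemma skew_tridiag_null_vec:
  assumes n: "odd n" and a: "\<And>i. odd i \<Longrightarrow> Suc i < n \<Longrightarrow> a i \<noteq> 0"
  shows "skew_tridiag n a *\<^sub>v vec n (skew_tridiag_null a) = 0\<^sub>v n"
proof (rule eq_vecI)
  fix i
  assume "i < dim_vec (0\<^sub>v n)"
  then have i: "i < n" by simp
  show "(skew_tridiag n a *\<^sub>v vec n (skew_tridiag_null a)) $ i = 0\<^sub>v n $ i"
  proof (cases "even i")
    case True
    then show ?thesis
      using i by (auto simp: skew_tridiag_mult_vec_index skew_tridiag_null_def)
  next
    case False
    then obtain m where m: "i = 2*m + 1" by (rule oddE)
    with i n have "Suc i < n" by presburger
    moreover have "a (2*m + 1) \<noteq> 0"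
      using a[of "2*m + 1"] \<open>Suc i < n\<close> m by simp
    ultimately show ?thesis
      using i m skew_tridiag_null_even_Suc[of a m]
      by (simp add: skew_tridiag_mult_vec_index mult_ac)
  qed
qed (simp add: skew_tridiag_def)

definition obs_row :: "nat \<Rightarrow> (nat \<Rightarrow> real) \<Rightarrow> nat \<Rightarrow> real vec" where
  "obs_row N a k = row (Cmat N * skew_tridiag (N + 2) a ^\<^sub>m k) 0"

lemma Cmat_mult_pow_carrier: "Cmat N * skew_tridiag (N + 2) a ^\<^sub>m k \<in> carrier_mat 1 (N + 2)"
  by (intro mult_carrier_mat[of _ 1 "N + 2"] pow_carrier_mat) (simp_all add: Cmat_def)

lemma obs_row_carrier [simp]: "obs_row N a k \<in> carrier_vec (N + 2)"
  unfolding obs_row_def by (rule row_carrier_vec[OF _ Cmat_mult_pow_carrier]) simp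

lemma obs_row_index: "j < N + 2 \<Longrightarrow> obs_row N a k $ j = (Cmat N * skew_tridiag (N + 2) a ^\<^sub>m k) $$ (0, j)"
  using carrier_matD[OF Cmat_mult_pow_carrier] by (simp add: obs_row_def)

lemma obs_row_0: "obs_row N a 0 = unit_vec (N + 2) 1"
  by (intro eq_vecI) (auto simp: obs_row_def Cmat_def skew_tridiag_def)

lemma obs_row_Suc: "obs_row N a (Suc k) = - (skew_tridiag (N + 2) a *\<^sub>v obs_row N a k)"
proof -
  let ?A = "skew_tridiag (N + 2) a" and ?X = "Cmat N * skew_tridiag (N + 2) a ^\<^sub>m k"
  have X: "?X \<in> carrier_mat 1 (N + 2)"
    by (rule Cmat_mult_pow_carrier)
  have "Cmat N * ?A ^\<^sub>m Suc k = ?X * ?A"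
    by (simp add: assoc_mult_mat[of _ 1 "N + 2" _ "N + 2" _ "N + 2"] Cmat_def)
  then have "obs_row N a (Suc k) = vec (N + 2) (\<lambda>j. row ?X 0 \<bullet> col ?A j)"
    using X by (simp add: obs_row_def)
  also have "\<dots> = - (?A *\<^sub>v obs_row N a k)"
  proof (rule eq_vecI)
    fix j
    assume "j < dim_vec (- (?A *\<^sub>v obs_row N a k))"
    then have j: "j < N + 2"
      using carrier_matD[OF skew_tridiag_carrier] by simp
    have "row ?X 0 \<bullet> col ?A j = - (row ?A j \<bullet> obs_row N a k)"
      using comm_scalar_prod[OF row_carrier_vec[OF j skew_tridiag_carrier] obs_row_carrier[of N a k]]
        j carrier_matD[OF X] carrier_matD[OF skew_tridiag_carrier]
      by (simp add: obs_row_def skew_tridiag_col)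
    then show "vec (N + 2) (\<lambda>j. row ?X 0 \<bullet> col ?A j) $ j = (- (?A *\<^sub>v obs_row N a k)) $ j"
      using j carrier_matD[OF skew_tridiag_carrier] by simp
  qed (simp add: carrier_matD[OF skew_tridiag_carrier])
  finally show ?thesis .
qed

lemma obs_row_Suc_index:
  assumes "j < N + 2"
  shows "obs_row N a (Suc k) $ j = (if j = 0 then 0 else a (j - 1) * obs_row N a k $ (j - 1))
    - (if Suc j < N + 2 then a j * obs_row N a k $ Suc j else 0)"
proof -
  have "obs_row N a (Suc k) $ j = - ((skew_tridiag (N + 2) a *\<^sub>v obs_row N a k) $ j)"
    unfolding obs_row_Suc using assms carrier_matD[OF skew_tridiag_carrier]
    by (simp del: index_mult_mat_vec)
  then show ?thesis
    unfolding skew_tridiag_mult_vec_index[OF obs_row_carrier assms] by simp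
qed

lemma obs_row_above_diag: "Suc k < j \<Longrightarrow> j < N + 2 \<Longrightarrow> obs_row N a k $ j = 0"
  by (induction k arbitrary: j) (auto simp: obs_row_0 obs_row_Suc_index)

lemma obs_row_diag: "Suc k < N + 2 \<Longrightarrow> obs_row N a k $ Suc k = (\<Prod>i=1..k. a i)"
  by (induction k) (auto simp: obs_row_0 obs_row_Suc_index obs_row_above_diag prod.cl_ivl_Suc)

lemma obs_row_null:
  assumes "odd N" and "\<And>i. odd i \<Longrightarrow> i \<le> N \<Longrightarrow> a i \<noteq> 0"
  shows "obs_row N a k \<bullet> vec (N + 2) (skew_tridiag_null a) = 0"
proof (cases k)
  case 0
  then show ?thesis
    by (simp add: obs_row_0 skew_tridiag_null_def)
next
  case (Suc k')
  have "skew_tridiag (N + 2) a *\<^sub>v vec (N + 2) (skew_tridiag_null a) = 0\<^sub>v (N + 2)"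
    using assms by (intro skew_tridiag_null_vec) auto
  then have "(Cmat N * skew_tridiag (N + 2) a ^\<^sub>m Suc k') *\<^sub>v vec (N + 2) (skew_tridiag_null a) = 0\<^sub>v 1"
    by (intro mult_pow_mat_null_vec) (auto simp: Cmat_def)
  then have "((Cmat N * skew_tridiag (N + 2) a ^\<^sub>m k) *\<^sub>v vec (N + 2) (skew_tridiag_null a)) $ 0 = 0"
    using Suc by simp
  then show ?thesis
    using carrier_matD(1)[OF Cmat_mult_pow_carrier[of N a k]] by (simp add: obs_row_def del: pow_mat.simps)
qed

definition obs_mat :: "nat \<Rightarrow> (nat \<Rightarrow> real) \<Rightarrow> real mat" where
  "obs_mat N a = mat (N + 1) (N + 1) (\<lambda>(i, j). obs_row N a i $ j)"

lemma obs_mat_carrier: "obs_mat N a \<in> carrier_mat (N + 1) (N + 1)"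
  by (simp add: obs_mat_def)

lemma obs_mat_mult_null:
  assumes "odd N" and "\<And>i. odd i \<Longrightarrow> i \<le> N \<Longrightarrow> a i \<noteq> 0"
  shows "obs_mat N a *\<^sub>v vec (N + 1) (skew_tridiag_null a) =
    (- (\<Prod>i=1..N. a i) * skew_tridiag_null a (N + 1)) \<cdot>\<^sub>v unit_vec (N + 1) N"
proof (rule eq_vecI)
  fix i
  assume "i < dim_vec ((- (\<Prod>i=1..N. a i) * skew_tridiag_null a (N + 1)) \<cdot>\<^sub>v unit_vec (N + 1) N)"
  then have i: "i < N + 1" by simp
  let ?r = "obs_row N a i" and ?v = "skew_tridiag_null a"
  have "(obs_mat N a *\<^sub>v vec (N + 1) ?v) $ i = (\<Sum>j<N + 1. ?r $ j * ?v j)"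
    using i by (simp add: obs_mat_def scalar_prod_def lessThan_atLeast0)
  also have "\<dots> = ?r \<bullet> vec (N + 2) ?v - ?r $ (N + 1) * ?v (N + 1)"
    by (simp add: scalar_prod_def lessThan_atLeast0)
  also have "\<dots> = - ?r $ (N + 1) * ?v (N + 1)"
    using obs_row_null[OF assms] by simp
  also have "\<dots> = ((- (\<Prod>i=1..N. a i) * ?v (N + 1)) \<cdot>\<^sub>v unit_vec (N + 1) N) $ i"
    using i obs_row_diag[of N N a] obs_row_above_diag[of i "N + 1" N a] by auto
  finally show "(obs_mat N a *\<^sub>v vec (N + 1) ?v) $ i =
      ((- (\<Prod>i=1..N. a i) * ?v (N + 1)) \<cdot>\<^sub>v unit_vec (N + 1) N) $ i" .
qed (simp add: obs_mat_def)

lemma det_obs_mat_minor: "det (mat_delete (obs_mat N a) N 0) = (\<Prod>k<N. \<Prod>i=1..k. a i)"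
proof -
  have minor: "mat_delete (obs_mat N a) N 0 \<in> carrier_mat N N"
    using mat_delete_carrier[OF obs_mat_carrier] by simp
  have "det (mat_delete (obs_mat N a) N 0) = prod_list (diag_mat (mat_delete (obs_mat N a) N 0))"
    by (rule det_lower_triangular[OF _ minor])
      (auto simp: mat_delete_def obs_mat_def obs_row_above_diag)
  also have "\<dots> = (\<Prod>k<N. \<Prod>i=1..k. a i)"
    by (simp add: prod_list_diag_prod mat_delete_def obs_mat_def obs_row_diag atLeast0LessThan)
  finally show ?thesis .
qed

lemma det_obs_mat:
  assumes "odd N" and "\<And>i. odd i \<Longrightarrow> i \<le> N \<Longrightarrow> a i \<noteq> 0"
  shows "det (obs_mat N a) = (\<Prod>i=1..N. a i) * skew_tridiag_null a (N + 1) * (\<Prod>k<N. \<Prod>i=1..k. a i)"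
proof -
  have "obs_mat N a *\<^sub>v vec (N + 1) (skew_tridiag_null a) =
      (- (\<Prod>i=1..N. a i) * skew_tridiag_null a (N + 1)) \<cdot>\<^sub>v unit_vec (N + 1) N"
    using assms by (rule obs_mat_mult_null)
  then have "det (obs_mat N a) = (-1) ^ N * (- (\<Prod>i=1..N. a i) * skew_tridiag_null a (N + 1))
      * det (mat_delete (obs_mat N a) N 0)"
    using obs_mat_carrier[of N a] by (intro det_by_vector_first_col) simp_all
  then show ?thesis
    using \<open>odd N\<close> by (simp add: det_obs_mat_minor)
qed

lemma obs_mat_inverse_last_col:
  assumes "odd N" and "\<And>i. odd i \<Longrightarrow> i \<le> N \<Longrightarrow> a i \<noteq> 0"
    and B: "B \<in> carrier_mat (N + 1) (N + 1)" and BM: "B * obs_mat N a = 1\<^sub>m (N + 1)"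
    and k: "k \<le> N"
  shows "- ((\<Prod>i=1..N. a i) * skew_tridiag_null a (N + 1)) * B $$ (k, N) = skew_tridiag_null a k"
proof -
  have Mx: "obs_mat N a *\<^sub>v vec (N + 1) (skew_tridiag_null a) =
      (- (\<Prod>i=1..N. a i) * skew_tridiag_null a (N + 1)) \<cdot>\<^sub>v unit_vec (N + 1) N"
    using assms(1,2) by (rule obs_mat_mult_null)
  have "(- (\<Prod>i=1..N. a i) * skew_tridiag_null a (N + 1)) * B $$ (k, N)
      = vec (N + 1) (skew_tridiag_null a) $ k"
    by (rule inverse_col_by_vector[OF obs_mat_carrier B BM _ Mx]) (use k in simp_all)
  then show ?thesis
    using k by simp
qed

definition supdiag :: "real \<Rightarrow> real \<Rightarrow> (nat \<Rightarrow> real) \<Rightarrow> nat \<Rightarrow> real" where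
  "supdiag ha hb h i = coef ha hb h (Suc i)"

lemma Amat_eq_skew_tridiag: "Amat N ha hb h = skew_tridiag (N + 2) (supdiag ha hb h)"
  unfolding Amat_def skew_tridiag_def supdiag_def by (simp only: Suc_eq_plus1)

lemma Pbar_eq_obs_mat: "Pbar N ha hb h = obs_mat N (supdiag ha hb h)"
  by (intro eq_matI) (auto simp: Pbar_def Pmat_def obs_mat_def obs_row_index Amat_eq_skew_tridiag)

lemma prod_supdiag: "(\<Prod>i=1..Suc k. supdiag ha hb h i) = hb * (\<Prod>i=1..k. h i)"
  by (induction k) (simp_all add: supdiag_def coef_def prod.cl_ivl_Suc)

lemma pvec_eq:
  assumes "N \<ge> 1"
  shows "pvec N ha hb h = vec (N + 1) (\<lambda>i. if i = N then hb * (\<Prod>i=1..N-1. h i) else 0)"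
proof (rule eq_vecI)
  fix i
  assume "i < dim_vec (vec (N + 1) (\<lambda>i. if i = N then hb * (\<Prod>i=1..N-1. h i) else 0))"
  then have i: "i < N + 1" by simp
  have "pvec N ha hb h $ i = obs_row N (supdiag ha hb h) i $ (N + 1)"
    using i by (simp add: pvec_def Pmat_def obs_row_index Amat_eq_skew_tridiag)
  also have "\<dots> = (if i = N then hb * (\<Prod>i=1..N-1. h i) else 0)"
    using i assms obs_row_diag[of N N] obs_row_above_diag[of i "N + 1" N] prod_supdiag[where k = "N - 1"]
    by auto
  finally show "pvec N ha hb h $ i = vec (N + 1) (\<lambda>i. if i = N then hb * (\<Prod>i=1..N-1. h i) else 0) $ i"
    using i by simp
qed (simp add: pvec_def)

lemma skew_tridiag_null_supdiag:
  "skew_tridiag_null (supdiag ha hb h) (2 * Suc p) =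
    ha * (\<Prod>j=1..p. h (2*j - 1)) / (hb * (\<Prod>j=1..p. h (2*j)))"
proof (induction p)
  case 0
  then show ?case by (simp add: skew_tridiag_null_def supdiag_def coef_def)
next
  case (Suc p)
  have "skew_tridiag_null (supdiag ha hb h) (2 * Suc (Suc p)) =
      skew_tridiag_null (supdiag ha hb h) (2 * Suc p) * (h (2 * Suc p - 1) / h (2 * Suc p))"
    by (simp only: skew_tridiag_null_even_Suc) (simp add: supdiag_def coef_def)
  also have "\<dots> = ha * (\<Prod>j=1..p. h (2*j - 1)) / (hb * (\<Prod>j=1..p. h (2*j)))
      * (h (2 * Suc p - 1) / h (2 * Suc p))"
    by (simp only: Suc.IH)
  finally show ?case
    by (simp add: prod.cl_ivl_Suc times_divide_times_eq mult_ac)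
qed

lemma prod_partial_prods_supdiag:
  "(\<Prod>k<Suc (Suc n). \<Prod>i=1..k. supdiag ha hb h i) = hb ^ Suc n * (\<Prod>i=1..n. h i ^ (Suc n - i))"
proof -
  have "(\<Prod>k<Suc (Suc n). \<Prod>i=1..k. supdiag ha hb h i) =
      (\<Prod>i=1..0. supdiag ha hb h i) * (\<Prod>k\<le>n. \<Prod>i=1..Suc k. supdiag ha hb h i)"
    unfolding lessThan_Suc_atMost by (rule prod.atMost_Suc_shift)
  also have "\<dots> = (\<Prod>k\<le>n. hb * (\<Prod>i=1..k. h i))"
    by (simp only: prod_supdiag) simp
  also have "\<dots> = hb ^ Suc n * (\<Prod>i=1..n. h i ^ (Suc n - i))"
    unfolding prod.distrib prod_partial_prods by simp
  finally show ?thesis .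
qed

context
  fixes N M :: nat and ha hb :: real and h :: "nat \<Rightarrow> real"
  assumes N: "N = 2*M + 3"
    and ha: "ha \<noteq> 0" and hb: "hb \<noteq> 0" and h: "\<forall>i\<in>{1..N-1}. h i \<noteq> 0"
begin

lemma N_odd: "odd N"
  using N by simp

lemma h_nonzero: "1 \<le> i \<Longrightarrow> i \<le> 2*M + 2 \<Longrightarrow> h i \<noteq> 0"
  using h N by auto

lemma supdiag_nonzero: "i \<le> N \<Longrightarrow> supdiag ha hb h i \<noteq> 0"
  using ha hb h_nonzero[of "i - 1"] N by (auto simp: supdiag_def coef_def)

lemma odd_h_prod_nonzero: "(\<Prod>j=1..M + 1. h (2*j - 1)) \<noteq> 0"
proof -
  have "h (2*j - 1) \<noteq> 0" if "j \<in> {1..M + 1}" for j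
    using that by (intro h_nonzero) auto
  then show ?thesis
    by (simp add: prod_zero_iff del: prod.cl_ivl_Suc)
qed

lemma supdiag_prod_times_null:
  "(\<Prod>i=1..N. supdiag ha hb h i) * skew_tridiag_null (supdiag ha hb h) (N + 1) =
    ha * (\<Prod>j=1..M + 1. h (2*j - 1)) ^ 2"
proof -
  let ?odd = "\<Prod>j=1..M + 1. h (2*j - 1)" and ?even = "\<Prod>j=1..M + 1. h (2*j)"
  have "h (2*j) \<noteq> 0" if "j \<in> {1..M + 1}" for j
    using that by (intro h_nonzero) auto
  then have "?even \<noteq> 0"
    by (simp add: prod_zero_iff del: prod.cl_ivl_Suc)
  have "(\<Prod>i=1..N. supdiag ha hb h i) = hb * (\<Prod>i=1..2*(M + 1). h i)"
  proof -
    have "N = Suc (2*(M + 1))"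
      using N by simp
    then show ?thesis
      by (simp only: prod_supdiag)
  qed
  also have "\<dots> = hb * (?odd * ?even)"
    by (simp only: prod_atLeastAtMost_in_pairs prod.distrib)
  finally have "(\<Prod>i=1..N. supdiag ha hb h i) = hb * (?odd * ?even)" .
  moreover have "skew_tridiag_null (supdiag ha hb h) (N + 1) = ha * ?odd / (hb * ?even)"
  proof -
    have "N + 1 = 2 * Suc (M + 1)"
      using N by simp
    then show ?thesis
      by (simp only: skew_tridiag_null_supdiag)
  qed
  ultimately show ?thesis
    using hb \<open>?even \<noteq> 0\<close> by (simp add: power2_eq_square)
qed

lemma Pbar_det_factored:
  "det (Pbar N ha hb h) = ha * (\<Prod>j=1..M + 1. h (2*j - 1)) ^ 2
    * (hb ^ (N - 1) * (\<Prod>i=1..N-2. h i ^ (N - 1 - i)))"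
proof -
  have "det (Pbar N ha hb h) = (\<Prod>i=1..N. supdiag ha hb h i) * skew_tridiag_null (supdiag ha hb h) (N + 1)
      * (\<Prod>k<N. \<Prod>i=1..k. supdiag ha hb h i)"
    unfolding Pbar_eq_obs_mat by (rule det_obs_mat) (simp_all add: N_odd supdiag_nonzero)
  also have "\<dots> = ha * (\<Prod>j=1..M + 1. h (2*j - 1)) ^ 2 * (\<Prod>k<N. \<Prod>i=1..k. supdiag ha hb h i)"
    by (simp only: supdiag_prod_times_null)
  also have "(\<Prod>k<N. \<Prod>i=1..k. supdiag ha hb h i) = hb ^ (N - 1) * (\<Prod>i=1..N-2. h i ^ (N - 1 - i))"
  proof -
    have n: "N = Suc (Suc (2*M + 1))"
      using N by simp
    show ?thesis
      unfolding n by (simp only: prod_partial_prods_supdiag numeral_2_eq_2 diff_Suc_1 diff_Suc_Suc minus_nat.diff_0)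
  qed
  finally show ?thesis .
qed

lemma Pbar_det_eq:
  "det (Pbar N ha hb h) = ha * hb ^ (N - 1) * h (N - 2) ^ 3 *
    (\<Prod>i=1..(N-3) div 2. h (2*i - 1) ^ (N + 2 - 2*i) * h (2*i) ^ (N - 1 - 2*i))"
proof -
  have powers: "(\<Prod>i=1..N-2. h i ^ (N - 1 - i)) = (\<Prod>i=1..2*M + 1. h i ^ (2*M + 2 - i))"
    using N by (simp del: prod.cl_ivl_Suc)
  have pairs: "(\<Prod>i=1..(N-3) div 2. h (2*i - 1) ^ (N + 2 - 2*i) * h (2*i) ^ (N - 1 - 2*i)) =
      (\<Prod>i=1..M. h (2*i - 1) ^ (2*M + 5 - 2*i) * h (2*i) ^ (2*M + 2 - 2*i))"
    using N by (simp add: add.commute del: prod.cl_ivl_Suc)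
  show ?thesis
    unfolding Pbar_det_factored powers pairs
    using prod_exponents_regroup[of h M] N by (simp add: mult_ac del: prod.cl_ivl_Suc)
qed

lemma partial_prods_nonzero: "hb ^ (N - 1) * (\<Prod>i=1..N-2. h i ^ (N - 1 - i)) \<noteq> 0"
proof -
  have "h i ^ (N - 1 - i) \<noteq> 0" if "i \<in> {1..N-2}" for i
    using that N h_nonzero[of i] by auto
  then show ?thesis
    using hb by (simp add: prod_zero_iff del: prod.cl_ivl_Suc)
qed

lemma Pbar_det_nonzero: "det (Pbar N ha hb h) \<noteq> 0"
  using ha odd_h_prod_nonzero partial_prods_nonzero by (simp add: Pbar_det_factored)

lemma Pbar_inverse_last_col:
  assumes B: "B \<in> carrier_mat (N + 1) (N + 1)" and BP: "inverts_mat B (Pbar N ha hb h)"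
    and k: "k \<le> N"
  shows "B $$ (k, N) = - (hb ^ (N - 1) * (\<Prod>i=1..N-2. h i ^ (N - 1 - i)) / det (Pbar N ha hb h))
    * skew_tridiag_null (supdiag ha hb h) k"
proof -
  define K where "K = hb ^ (N - 1) * (\<Prod>i=1..N-2. h i ^ (N - 1 - i))"
  define c where "c = ha * (\<Prod>j=1..M + 1. h (2*j - 1)) ^ 2"
  have "B * obs_mat N (supdiag ha hb h) = 1\<^sub>m (N + 1)"
    using B BP by (simp add: inverts_mat_def Pbar_eq_obs_mat)
  then have "- ((\<Prod>i=1..N. supdiag ha hb h i) * skew_tridiag_null (supdiag ha hb h) (N + 1)) * B $$ (k, N)
      = skew_tridiag_null (supdiag ha hb h) k"
    using B k by (intro obs_mat_inverse_last_col) (simp_all add: N_odd supdiag_nonzero)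
  then have "- c * B $$ (k, N) = skew_tridiag_null (supdiag ha hb h) k"
    unfolding c_def by (simp only: supdiag_prod_times_null)
  moreover have "det (Pbar N ha hb h) = c * K"
    unfolding c_def K_def by (rule Pbar_det_factored)
  moreover have "c \<noteq> 0" and "K \<noteq> 0"
    using ha odd_h_prod_nonzero partial_prods_nonzero by (simp_all add: c_def K_def)
  ultimately show ?thesis
    unfolding K_def[symmetric] by (simp add: field_simps)
qed

end

theorem lemma4:
  fixes N :: nat and ha hb :: real and h :: "nat \<Rightarrow> real"
  assumes "N \<ge> 3" and "odd N"
    and "ha \<noteq> 0" and "hb \<noteq> 0" and "\<forall>i\<in>{1..N-1}. h i \<noteq> 0"
  defines "D \<equiv> det (Pbar N ha hb h)"
    and "K \<equiv> hb ^ (N - 1) * (\<Prod>i=1..N-2. h i ^ (N - 1 - i))"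
  shows "pvec N ha hb h = vec (N+1) (\<lambda>i. if i = N then hb * (\<Prod>i=1..N-1. h i) else 0)
    \<and> D = ha * hb ^ (N - 1) * h (N - 2) ^ 3 *
             (\<Prod>i=1..(N-3) div 2. h (2*i-1) ^ (N + 2 - 2*i) * h (2*i) ^ (N - 1 - 2*i))
    \<and> D \<noteq> 0
    \<and> (\<forall>B. B \<in> carrier_mat (N+1) (N+1) \<and> inverts_mat (Pbar N ha hb h) B
              \<and> inverts_mat B (Pbar N ha hb h) \<longrightarrow>
           (\<forall>k\<in>{1..N+1}. even k \<longrightarrow> B $$ (k-1, N) = 0)
         \<and> B $$ (0, N) = - K / D
         \<and> (\<forall>k\<in>{3..N}. odd k \<longrightarrow>
              B $$ (k-1, N) = - (K / D) *
                 ((ha * (\<Prod>j=1..(k-3) div 2. h (2*j-1))) /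
                  (hb * (\<Prod>j=1..(k-3) div 2. h (2*j))))))"
proof -
  define M where "M = (N - 3) div 2"
  have N: "N = 2*M + 3"
    using assms(1,2) unfolding M_def by presburger
  have col: "B $$ (k, N) = - (K / D) * skew_tridiag_null (supdiag ha hb h) k"
    if "B \<in> carrier_mat (N+1) (N+1) \<and> inverts_mat (Pbar N ha hb h) B \<and> inverts_mat B (Pbar N ha hb h)"
      and "k \<le> N" for B k
    using that Pbar_inverse_last_col[OF N assms(3-5)] unfolding K_def D_def by blast
  show ?thesis
  proof (intro conjI allI impI ballI)
    show "pvec N ha hb h = vec (N+1) (\<lambda>i. if i = N then hb * (\<Prod>i=1..N-1. h i) else 0)"
      using assms(1) by (intro pvec_eq) simp
    show "D = ha * hb ^ (N - 1) * h (N - 2) ^ 3 *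
        (\<Prod>i=1..(N-3) div 2. h (2*i-1) ^ (N + 2 - 2*i) * h (2*i) ^ (N - 1 - 2*i))"
      unfolding D_def by (rule Pbar_det_eq[OF N assms(3-5)])
    show "D \<noteq> 0"
      unfolding D_def by (rule Pbar_det_nonzero[OF N assms(3-5)])
    fix B
    assume B: "B \<in> carrier_mat (N+1) (N+1) \<and> inverts_mat (Pbar N ha hb h) B \<and> inverts_mat B (Pbar N ha hb h)"
    show "B $$ (0, N) = - K / D"
      using col[OF B, of 0] by simp
    show "B $$ (k - 1, N) = 0" if "k \<in> {1..N+1}" and "even k" for k
      using col[OF B, of "k - 1"] that by (auto simp: skew_tridiag_null_def)
    show "B $$ (k - 1, N) = - (K / D) * ((ha * (\<Prod>j=1..(k-3) div 2. h (2*j-1))) /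
        (hb * (\<Prod>j=1..(k-3) div 2. h (2*j))))" if "k \<in> {3..N}" and "odd k" for k
    proof -
      have "k - 1 = 2 * Suc ((k - 3) div 2)" and "k - 1 \<le> N"
        using that by (auto elim!: oddE)
      then show ?thesis
        using col[OF B, of "k - 1"] by (simp only: skew_tridiag_null_supdiag)
    qed
  qed
qed

end
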